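(* Let $\beta_1,\dots,\beta_N\in\mathbb R$ with $\beta_a\beta_b\ne0$ for some $a,b$. Then $\widetilde C_\beta$ is an orthogonal projection if and only if $(d-1)\sum_{i=1}^N\beta_i^2+\big(\sum_{i=1}^N\beta_i\big)^2=1$. If this condition holds, then $C_\beta\ge0$ and $\mathrm{Tr}_{\{1,\dots,N\}}C_\beta=I$, so $C_\beta$ is the Choi matrix of a quantum channel $\mathcal M_d\to\mathcal M_d^{\otimes N}$.
   Context: Fix $d\ge2$, $N\ge1$. Tensor factors of $(\mathbb C^d)^{\otimes(N+1)}$ are labelled $0,\dots,N$. For a permutation $\sigma$ of $\{0,\dots,N\}$, $\Pi_\sigma(v_0\otimes\cdots\otimes v_N)=v_{\sigma^{-1}(0)}\otimes\cdots\otimes v_{\sigma^{-1}(N)}$ and $\Pi_\sigma^\Gamma$ is its partial transpose on factor $0$ in the standard basis. For $1\le a,b\le N$, $\Sigma_{a,b}=\{\sigma:\sigma(0)=a,\sigma(b)=0\}$. Define $\widetilde C_\beta=\sum_{1\le a,b\le N}\sum_{\sigma\in\Sigma_{a,b}}\frac{\beta_a\beta_b}{(N-1)!}\Pi_\sigma^\Gamma$ and $C_\beta=\frac{d}{\binom{N+d-1}{N}}\frac{N+d-1}{N}\widetilde C_\beta$. A matrix $C$ is the Choi matrix of a quantum channel iff $C\ge0$ and its partial trace over factors $1,\dots,N$ is $I$ (factor $0$ being the input). *)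

theory Defs
  imports Complex_Main "HOL-Combinatorics.Permutations" "Jordan_Normal_Form.Schur_Decomposition"
begin

text \<open>The Hilbert space (C^d)^{tensor (N+1)} is identified with C^(d^(N+1)); the standard
basis vector |i_0 i_1 ... i_N> (tensor factors 0..N, digits i_k < d) has index
sum_k i_k * d^(N-k), i.e. factor 0 is the most significant digit.\<close>

definition dig :: "nat \<Rightarrow> nat \<Rightarrow> nat \<Rightarrow> nat \<Rightarrow> nat" where
  "dig d N x k = (x div d ^ (N - k)) mod d"

text \<open>Permutation operator: Pi_sigma (v_0 x ... x v_N) = v_{sigma^-1 0} x ... x v_{sigma^-1 N},
so <j| Pi_sigma |i> = 1 iff j_{sigma k} = i_k for all k.\<close>
definition perm_op :: "nat \<Rightarrow> nat \<Rightarrow> (nat \<Rightarrow> nat) \<Rightarrow> complex mat" where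
  "perm_op d N \<sigma> = mat (d ^ (N + 1)) (d ^ (N + 1))
     (\<lambda>(r, c). if (\<forall>k\<le>N. dig d N r (\<sigma> k) = dig d N c k) then 1 else 0)"

text \<open>Partial transpose on tensor factor 0 in the standard basis:
<j_0 j'| X^Gamma |i_0 i'> = <i_0 j'| X |j_0 i'>.\<close>
definition ptrans0 :: "nat \<Rightarrow> nat \<Rightarrow> complex mat \<Rightarrow> complex mat" where
  "ptrans0 d N X = mat (d ^ (N + 1)) (d ^ (N + 1))
     (\<lambda>(r, c). X $$ ((c div d ^ N) * d ^ N + r mod d ^ N, (r div d ^ N) * d ^ N + c mod d ^ N))"

definition Sigma_ab :: "nat \<Rightarrow> nat \<Rightarrow> nat \<Rightarrow> (nat \<Rightarrow> nat) set" where
  "Sigma_ab N a b = {\<sigma>. \<sigma> permutes {0..N} \<and> \<sigma> 0 = a \<and> \<sigma> b = 0}"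

definition Ctilde :: "nat \<Rightarrow> nat \<Rightarrow> (nat \<Rightarrow> real) \<Rightarrow> complex mat" where
  "Ctilde d N \<beta> = mat (d ^ (N + 1)) (d ^ (N + 1))
     (\<lambda>(r, c). \<Sum>a\<in>{1..N}. \<Sum>b\<in>{1..N}. \<Sum>\<sigma>\<in>Sigma_ab N a b.
        complex_of_real (\<beta> a * \<beta> b / fact (N - 1)) * ptrans0 d N (perm_op d N \<sigma>) $$ (r, c))"

definition Cbeta :: "nat \<Rightarrow> nat \<Rightarrow> (nat \<Rightarrow> real) \<Rightarrow> complex mat" where
  "Cbeta d N \<beta> = complex_of_real (real d / real ((N + d - 1) choose N) * (real (N + d - 1) / real N))
     \<cdot>\<^sub>m Ctilde d N \<beta>"

definition orth_proj :: "complex mat \<Rightarrow> bool" where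
  "orth_proj P \<longleftrightarrow> square_mat P \<and> P * P = P \<and> mat_adjoint P = P"

definition psd :: "complex mat \<Rightarrow> bool" where
  "psd A \<longleftrightarrow> square_mat A \<and> mat_adjoint A = A \<and>
     (\<forall>v \<in> carrier_vec (dim_row A). 0 \<le> Re (conjugate v \<bullet> (A *\<^sub>v v)))"

text \<open>Partial trace over tensor factors 1..N (factor 0 kept).\<close>
definition ptrace_rest :: "nat \<Rightarrow> nat \<Rightarrow> complex mat \<Rightarrow> complex mat" where
  "ptrace_rest d N C = mat d d (\<lambda>(p, q). \<Sum>r<d ^ N. C $$ (p * d ^ N + r, q * d ^ N + r))"

definition is_channel_choi :: "nat \<Rightarrow> nat \<Rightarrow> complex mat \<Rightarrow> bool" where
  "is_channel_choi d N C \<longleftrightarrow> C \<in> carrier_mat (d ^ (N + 1)) (d ^ (N + 1)) \<and>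
     psd C \<and> ptrace_rest d N C = 1\<^sub>m d"

end

theory Submission
  imports Defs
begin

text \<open>
  Write basis vectors as digit strings \<open>x : {0..N} \<rightarrow> {..<d}\<close>. For \<open>\<sigma> \<in> \<Sigma>\<^sub>a\<^sub>b\<close> the
  matrix \<open>\<Pi>\<^sub>\<sigma>\<^sup>\<Gamma>\<close> has 0/1 entries, and \<open>\<langle>x|\<Pi>\<^sub>\<sigma>\<^sup>\<Gamma>|y\<rangle> = 1\<close> iff
  \<open>x a = x 0\<close>, \<open>y b = y 0\<close> and \<open>x (\<sigma> k) = y k\<close> for \<open>k \<notin> {0, b}\<close>.
  Counting the intermediate strings shows
  \<open>\<Pi>\<^sub>\<sigma>\<^sup>\<Gamma> \<Pi>\<^sub>\<sigma>\<^sub>'\<^sup>\<Gamma> = d\<^bsup>[b = a']\<^esup> \<Pi>\<^sub>\<theta>\<^sup>\<Gamma>\<close> for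
  \<open>\<sigma>' \<in> \<Sigma>\<^sub>a\<^sub>'\<^sub>b\<^sub>'\<close>, where \<open>\<theta> = \<sigma> (a' b) \<sigma>' (0 b') \<in> \<Sigma>\<^sub>a\<^sub>b\<^sub>'\<close>, and for fixed
  \<open>\<sigma>'\<close> the map \<open>\<sigma> \<mapsto> \<theta>\<close> is a bijection \<open>\<Sigma>\<^sub>a\<^sub>b \<rightarrow> \<Sigma>\<^sub>a\<^sub>b\<^sub>'\<close>. With the
  weights \<open>\<beta>\<^sub>a \<beta>\<^sub>b\<close> this gives \<open>Ctilde\<^sup>2 = \<lambda> Ctilde\<close> for
  \<open>\<lambda> = (d - 1) \<Sum> \<beta>\<^sub>i\<^sup>2 + (\<Sum> \<beta>\<^sub>i)\<^sup>2\<close>. Inversion exchanges \<open>\<Sigma>\<^sub>a\<^sub>b\<close> and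
  \<open>\<Sigma>\<^sub>b\<^sub>a\<close>, so \<open>Ctilde\<close> is Hermitian; a nonzero diagonal entry then shows that it is a
  projection only if \<open>\<lambda> = 1\<close>. In the partial trace, the diagonal blocks of \<open>\<Pi>\<^sub>\<sigma>\<^sup>\<Gamma>\<close>
  count the colourings of \<open>{1..N}\<close> with \<open>d\<close> colours that are invariant under
  \<open>(0 a) \<circ> \<sigma>\<close>; summed over all permutations of \<open>{1..N}\<close> there are
  \<open>d (d + 1) \<cdots> (d + N - 1)\<close> of them, which is exactly the normalisation built into
  \<open>Cbeta\<close>.
\<close>


lemma sum_if_eq_card: "finite A \<Longrightarrow> (\<Sum>y\<in>A. if P y then 1 else 0) = real (card {y\<in>A. P y})"
  by (simp add: sum.inter_filter[symmetric])

lemma sum_mult_sum_swap: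
  "(\<Sum>y\<in>Y. (\<Sum>p\<in>P. f p y) * (\<Sum>q\<in>Q. g q y)) = (\<Sum>p\<in>P. \<Sum>q\<in>Q. \<Sum>y\<in>Y. f p y * g q y)"
  for f g :: "_ \<Rightarrow> _ \<Rightarrow> 'a::comm_semiring_0"
  by (simp add: sum_product sum.swap[where A = Y])

lemma sum_quadruple_separate:
  "(\<Sum>a\<in>A. \<Sum>c\<in>C. \<Sum>b\<in>B. \<Sum>e\<in>E. g a e * h b c) = (\<Sum>a\<in>A. \<Sum>e\<in>E. g a e) * (\<Sum>b\<in>B. \<Sum>c\<in>C. h b c)"
  for g h :: "_ \<Rightarrow> _ \<Rightarrow> 'a::comm_semiring_0"
  by (simp only: sum_product sum.swap[where A = C])

lemma sum_sum_if_eq: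
  fixes \<beta> :: "'a \<Rightarrow> 'b::comm_ring_1"
  assumes "finite I"
  shows "(\<Sum>i\<in>I. \<Sum>j\<in>I. \<beta> i * \<beta> j * (if i = j then c else 1)) =
    (c - 1) * (\<Sum>i\<in>I. (\<beta> i)\<^sup>2) + (\<Sum>i\<in>I. \<beta> i)\<^sup>2"
proof -
  have "(\<Sum>i\<in>I. \<Sum>j\<in>I. \<beta> i * \<beta> j * (if i = j then c else 1)) =
      (\<Sum>i\<in>I. \<Sum>j\<in>I. \<beta> i * \<beta> j + (if i = j then (c - 1) * (\<beta> i)\<^sup>2 else 0))"
    by (intro sum.cong refl) (simp add: algebra_simps power2_eq_square)
  also have "\<dots> = (\<Sum>i\<in>I. \<Sum>j\<in>I. \<beta> i * \<beta> j) + (\<Sum>i\<in>I. (c - 1) * (\<beta> i)\<^sup>2)"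
    using assms by (simp add: sum.distrib)
  also have "(\<Sum>i\<in>I. \<Sum>j\<in>I. \<beta> i * \<beta> j) = (\<Sum>i\<in>I. \<beta> i)\<^sup>2"
    by (simp add: power2_eq_square sum_product)
  finally show ?thesis by (simp add: sum_distrib_left)
qed

lemma binomial_eq_pochhammer:
  assumes "1 \<le> d"
  shows "real ((n + d - 1) choose n) = pochhammer (real d) n / fact n"
proof -
  have "real (n + d - 1) - real n + 1 = real d" using assms by (simp add: of_nat_diff)
  then show ?thesis by (simp add: binomial_gbinomial gbinomial_pochhammer')
qed


section \<open>Positive semidefinite matrices\<close>

lemma conjugate_scalar_prod_adjoint:
  fixes A :: "complex mat"
  assumes A: "A \<in> carrier_mat m n" and v: "v \<in> carrier_vec n" and w: "w \<in> carrier_vec m"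
  shows "conjugate v \<bullet> (mat_adjoint A *\<^sub>v w) = conjugate (A *\<^sub>v v) \<bullet> w"
proof -
  have "conjugate v \<bullet> (mat_adjoint A *\<^sub>v w) = (\<Sum>i<n. \<Sum>j<m. cnj (v $ i) * (cnj (A $$ (j, i)) * w $ j))"
    using A v w
    by (simp add: scalar_prod_def mat_adjoint_def mat_of_rows_def lessThan_atLeast0 sum_distrib_left)
  also have "\<dots> = (\<Sum>j<m. \<Sum>i<n. cnj (A $$ (j, i) * v $ i) * w $ j)"
    by (subst sum.swap) (simp add: mult_ac)
  also have "\<dots> = conjugate (A *\<^sub>v v) \<bullet> w"
    using A v w by (simp add: scalar_prod_def lessThan_atLeast0 sum_distrib_right cnj_sum)
  finally show ?thesis .
qed

lemma psd_orth_proj: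
  assumes "orth_proj A"
  shows "psd A"
proof -
  obtain n where A: "A \<in> carrier_mat n n" using assms by (auto simp: orth_proj_def square_mat.simps)
  have "0 \<le> Re (conjugate v \<bullet> (A *\<^sub>v v))" if v: "v \<in> carrier_vec n" for v
  proof -
    have "A *\<^sub>v v = mat_adjoint A *\<^sub>v (A *\<^sub>v v)"
      using assms A v by (simp add: orth_proj_def flip: assoc_mult_mat_vec)
    then have "conjugate v \<bullet> (A *\<^sub>v v) = conjugate (A *\<^sub>v v) \<bullet> (A *\<^sub>v v)"
      using conjugate_scalar_prod_adjoint[OF A v, of "A *\<^sub>v v"] A v by simp
    also have "\<dots> = (A *\<^sub>v v) \<bullet>c (A *\<^sub>v v)"
      using A v by (simp add: comm_scalar_prod[of _ n])
    finally show ?thesis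
      using conjugate_square_ge_0_vec[of "A *\<^sub>v v"] by (simp add: less_eq_complex_def)
  qed
  then show ?thesis using assms A by (auto simp: psd_def orth_proj_def)
qed

lemma psd_smult:
  assumes "psd A" "0 \<le> c"
  shows "psd (complex_of_real c \<cdot>\<^sub>m A)"
proof -
  obtain n where A: "A \<in> carrier_mat n n" using assms(1) by (auto simp: psd_def square_mat.simps)
  have "mat_adjoint (complex_of_real c \<cdot>\<^sub>m A) = complex_of_real c \<cdot>\<^sub>m mat_adjoint A"
    using A by (intro eq_matI) (simp_all add: mat_adjoint_def mat_of_rows_def)
  moreover have "(complex_of_real c \<cdot>\<^sub>m A) *\<^sub>v v = complex_of_real c \<cdot>\<^sub>v (A *\<^sub>v v)"
    if "v \<in> carrier_vec n" for v
    using A that by (intro eq_vecI) simp_all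
  ultimately show ?thesis
    using assms A by (auto simp: psd_def)
qed


section \<open>Colourings invariant under a permutation\<close>

definition invariant_colourings :: "nat \<Rightarrow> nat set \<Rightarrow> (nat \<Rightarrow> nat) \<Rightarrow> (nat \<Rightarrow> nat) set" where
  "invariant_colourings d S \<pi> = {y \<in> PiE S (\<lambda>_. {..<d}). \<forall>k\<in>S. y (\<pi> k) = y k}"

lemma finite_invariant_colourings: "finite S \<Longrightarrow> finite (invariant_colourings d S \<pi>)"
  by (simp add: invariant_colourings_def finite_PiE)

lemma invariant_colourings_insert:
  assumes bS: "b \<notin> S0" and p: "p permutes S0" and c: "c \<in> insert b S0"
  shows "invariant_colourings d (insert b S0) (transpose b c \<circ> p) =
    (\<lambda>(z, i). z(b := i)) ` (SIGMA z:invariant_colourings d S0 p. {i. i < d \<and> (c = b \<or> i = z c)})"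
    (is "?L = ?ext ` ?P")
proof -
  have pS: "p k \<in> S0" if "k \<in> S0" for k using permutes_in_image[OF p] that by simp
  have pb: "p b = b" using permutes_not_in[OF p bS] .
  show ?thesis
  proof (rule Set.set_eqI, rule iffI)
    fix y assume y: "y \<in> ?L"
    then have inv: "y (transpose b c (p k)) = y k" if "k \<in> insert b S0" for k
      using that by (auto simp: invariant_colourings_def)
    have ybc: "y b = y c" using inv[of b] pb by simp
    have "y (p k) = y k" if k: "k \<in> S0" for k
    proof -
      have "p k \<noteq> b" using pS[OF k] bS by auto
      then show ?thesis using inv[of k] k ybc by (cases "p k = c") (auto simp: transpose_def)
    qed
    then have "(restrict y S0, y b) \<in> ?P"
      using y c pS ybc by (auto simp: invariant_colourings_def PiE_iff)
    moreover have "y = ?ext (restrict y S0, y b)"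
      using y by (auto simp: invariant_colourings_def PiE_iff extensional_def fun_eq_iff)
    ultimately show "y \<in> ?ext ` ?P" by (rule rev_image_eqI)
  next
    fix y assume "y \<in> ?ext ` ?P"
    then obtain z i where i: "i < d" and z: "z \<in> invariant_colourings d S0 p" and ic: "c = b \<or> i = z c"
      and y: "y = z(b := i)" by auto
    have "y (transpose b c (p k)) = y k" if k: "k \<in> insert b S0" for k
    proof (cases "k = b")
      case True then show ?thesis using pb ic y by auto
    next
      case False
      then have "k \<in> S0" "p k \<noteq> b" using k pS bS by auto
      then show ?thesis
        using z ic bS pS by (cases "p k = c") (auto simp: y transpose_def invariant_colourings_def)
    qed
    then show "y \<in> ?L"
      using z i by (auto simp: y invariant_colourings_def PiE_iff extensional_def)
  qed
qed

lemma card_invariant_colourings_insert: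
  assumes fin: "finite S0" and bS: "b \<notin> S0" and p: "p permutes S0" and c: "c \<in> insert b S0"
  shows "card (invariant_colourings d (insert b S0) (transpose b c \<circ> p)) =
    (if c = b then d else 1) * card (invariant_colourings d S0 p)"
proof -
  let ?I = "\<lambda>z. {i. i < d \<and> (c = b \<or> i = z c)}"
  have "inj_on (\<lambda>(z, i). z(b := i)) (SIGMA z:invariant_colourings d S0 p. ?I z)"
  proof (rule inj_onI, clarsimp)
    fix i z i' z'
    assume z: "z \<in> invariant_colourings d S0 p" and z': "z' \<in> invariant_colourings d S0 p"
      and eq: "z(b := i) = z'(b := i')"
    then have "i = i'" by (metis fun_upd_same)
    moreover have "z k = z' k" for k
      using fun_cong[OF eq, of k] z z' bS
      by (cases "k = b") (auto simp: invariant_colourings_def PiE_iff extensional_def)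
    ultimately show "z = z' \<and> i = i'" by auto
  qed
  then have "card (invariant_colourings d (insert b S0) (transpose b c \<circ> p)) =
      card (SIGMA z:invariant_colourings d S0 p. ?I z)"
    unfolding invariant_colourings_insert[OF bS p c] by (rule card_image)
  also have "\<dots> = (\<Sum>z\<in>invariant_colourings d S0 p. card (?I z))"
    by (simp add: card_SigmaI finite_invariant_colourings[OF fin])
  also have "\<dots> = (\<Sum>z\<in>invariant_colourings d S0 p. if c = b then d else 1)"
  proof (intro sum.cong refl)
    fix z assume "z \<in> invariant_colourings d S0 p"
    then have "c \<noteq> b \<Longrightarrow> ?I z = {z c}" using c by (auto simp: invariant_colourings_def PiE_iff)
    then show "card (?I z) = (if c = b then d else 1)"
      by (cases "c = b") simp_all
  qed
  finally show ?thesis by (simp add: mult.commute)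
qed

lemma sum_card_invariant_colourings:
  assumes "finite S"
  shows "(\<Sum>p\<in>{p. p permutes S}. card (invariant_colourings d S p)) = pochhammer d (card S)"
  using assms
proof (induction S rule: finite_induct)
  case empty
  have "invariant_colourings d {} p = {\<lambda>_. undefined}" for p by (auto simp: invariant_colourings_def)
  then show ?case by (simp add: permutes_empty)
next
  case (insert b S0)
  have "(\<Sum>p\<in>{p. p permutes insert b S0}. card (invariant_colourings d (insert b S0) p)) =
      (\<Sum>c\<in>insert b S0. \<Sum>q\<in>{p. p permutes S0}.
        card (invariant_colourings d (insert b S0) (transpose b c \<circ> q)))"
    by (rule sum_over_permutations_insert[OF insert(1,2)])
  also have "\<dots> = (\<Sum>c\<in>insert b S0. \<Sum>q\<in>{p. p permutes S0}.
      (if c = b then d else 1) * card (invariant_colourings d S0 q))"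
    using card_invariant_colourings_insert[OF insert(1,2)] by (intro sum.cong refl) auto
  also have "\<dots> = (\<Sum>c\<in>insert b S0. (if c = b then d else 1)) * pochhammer d (card S0)"
    by (simp add: sum_distrib_left[symmetric] sum_distrib_right insert.IH)
  also have "(\<Sum>c\<in>insert b S0. (if c = b then d else 1)) = d + card S0"
  proof -
    have "S0 \<inter> - {b} = S0" using insert(2) by auto
    then show ?thesis using insert(1,2) by (simp add: sum.If_cases)
  qed
  finally show ?case using insert(1,2) by (simp add: pochhammer_Suc mult.commute)
qed

lemma card_invariant_colourings_value:
  assumes fin: "finite S" and a: "a \<in> S" and \<pi>: "\<pi> permutes S" and p: "p < d"
  shows "d * card {y\<in>invariant_colourings d S \<pi>. y a = p} = card (invariant_colourings d S \<pi>)"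
proof -
  define A where "A = (\<lambda>i. {y\<in>invariant_colourings d S \<pi>. y a = i})"
  have piS: "\<pi> k \<in> S" if "k \<in> S" for k using permutes_in_image[OF \<pi>] that by simp
  have eq: "card (A p') = card (A p)" if p': "p' < d" for p'
  proof -
    \<comment> \<open>swapping the colours \<open>p\<close> and \<open>p'\<close> is an involution of the invariant colourings\<close>
    define f where "f = (\<lambda>y::nat\<Rightarrow>nat. restrict (transpose p p' \<circ> y) S)"
    have ff: "f (f y) = y" if "y \<in> invariant_colourings d S \<pi>" for y
    proof
      fix k show "f (f y) k = y k"
        using that by (cases "k \<in> S") (auto simp: f_def invariant_colourings_def PiE_iff extensional_def)
    qed
    have tl: "transpose p p' v < d" if "v < d" for v using that p p' by (auto simp: transpose_def)
    have fI: "f y \<in> invariant_colourings d S \<pi>" if "y \<in> invariant_colourings d S \<pi>" for y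
      using that tl piS by (auto simp: f_def invariant_colourings_def PiE_iff)
    have "bij_betw f (A p') (A p)"
      by (rule bij_betw_byWitness[where f'=f]) (use ff fI a in \<open>auto simp: A_def f_def\<close>)
    then show ?thesis by (rule bij_betw_same_card)
  qed
  have U: "invariant_colourings d S \<pi> = (\<Union>i\<in>{..<d}. A i)"
    using a by (auto simp: A_def invariant_colourings_def PiE_iff)
  have "card (invariant_colourings d S \<pi>) = (\<Sum>i\<in>{..<d}. card (A i))"
    unfolding U by (rule card_UN_disjoint) (auto simp: A_def finite_invariant_colourings[OF fin])
  also have "\<dots> = d * card (A p)" using eq by simp
  finally show ?thesis by (simp add: A_def)
qed

lemma permutes_invariant_last:
  assumes fin: "finite S" and \<pi>: "\<pi> permutes S" and b: "b \<in> S"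
    and H: "\<forall>k\<in>S-{b}. x (\<pi> k) = x k"
  shows "x (\<pi> b) = x b"
proof -
  \<comment> \<open>\<open>x\<close> and \<open>x \<circ> \<pi>\<close> take the value \<open>x (\<pi> b)\<close> equally often on \<open>S\<close>\<close>
  define v where "v = x (\<pi> b)"
  have "(\<Sum>k\<in>S. (if x (\<pi> k) = v then 1 else 0::nat)) = (\<Sum>k\<in>S. (if x k = v then 1 else 0))"
    using sum.reindex_bij_betw[OF permutes_imp_bij[OF \<pi>], of "\<lambda>j. if x j = v then 1 else (0::nat)"] by simp
  moreover have "(\<Sum>k\<in>S. (if x (\<pi> k) = v then 1 else 0::nat)) =
      1 + (\<Sum>k\<in>S-{b}. (if x k = v then 1 else 0))"
    using sum.remove[OF fin b, of "\<lambda>k. if x (\<pi> k) = v then 1 else (0::nat)"] H by (simp add: v_def)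
  moreover have "(\<Sum>k\<in>S. (if x k = v then 1 else 0::nat)) =
      (if x b = v then 1 else 0) + (\<Sum>k\<in>S-{b}. (if x k = v then 1 else 0))"
    using sum.remove[OF fin b, of "\<lambda>k. if x k = v then 1 else (0::nat)"] by simp
  ultimately have "(if x b = v then 1 else 0::nat) = 1" by linarith
  then have "x b = v" by (cases "x b = v") simp_all
  then show ?thesis by (simp add: v_def)
qed


section \<open>Basis indices as digit strings\<close>

definition basis_digits :: "nat \<Rightarrow> nat \<Rightarrow> nat \<Rightarrow> nat \<Rightarrow> nat" where
  "basis_digits d N m = restrict (dig d N m) {0..N}"

definition digit_strings :: "nat \<Rightarrow> nat \<Rightarrow> (nat \<Rightarrow> nat) set" where
  "digit_strings d N = PiE {0..N} (\<lambda>_. {..<d})"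

lemma mem_digit_strings_iff:
  "x \<in> digit_strings d N \<longleftrightarrow> (\<forall>k\<in>{0..N}. x k < d) \<and> (\<forall>k. k \<notin> {0..N} \<longrightarrow> x k = undefined)"
  by (auto simp: digit_strings_def PiE_iff extensional_def)

lemma finite_digit_strings: "finite (digit_strings d N)"
  by (simp add: digit_strings_def finite_PiE)

lemma mod_power_eq_sum_digits: "(m::nat) mod d ^ L = (\<Sum>j<L. (m div d ^ j mod d) * d ^ j)"
proof (induction L)
  case (Suc L)
  have "m mod d ^ Suc L = d ^ L * (m div d ^ L mod d) + m mod d ^ L"
    by (metis mod_mult2_eq power_Suc2)
  then show ?case using Suc by (simp add: mult.commute)
qed simp

lemma dig_less: "0 < d \<Longrightarrow> dig d N m k < d"
  by (simp add: dig_def)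

lemma basis_digits_in_digit_strings: "0 < d \<Longrightarrow> basis_digits d N m \<in> digit_strings d N"
  by (auto simp: basis_digits_def digit_strings_def dig_less)

lemma inj_on_basis_digits: "inj_on (basis_digits d N) {..<d ^ (N + 1)}"
proof (rule inj_onI)
  fix m m' assume m: "m \<in> {..<d ^ (N + 1)}" and m': "m' \<in> {..<d ^ (N + 1)}"
    and eq: "basis_digits d N m = basis_digits d N m'"
  have "dig d N m (N - j) = dig d N m' (N - j)" if "j < N + 1" for j
    using fun_cong[OF eq, of "N - j"] by (simp add: basis_digits_def)
  then have "m div d ^ j mod d = m' div d ^ j mod d" if "j < N + 1" for j
    using that by (simp add: dig_def)
  then have "m mod d ^ (N + 1) = m' mod d ^ (N + 1)"
    unfolding mod_power_eq_sum_digits by (intro sum.cong) auto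
  then show "m = m'" using m m' by simp
qed

lemma bij_betw_basis_digits:
  assumes "0 < d"
  shows "bij_betw (basis_digits d N) {..<d ^ (N + 1)} (digit_strings d N)"
proof -
  have "basis_digits d N ` {..<d ^ (N + 1)} \<subseteq> digit_strings d N"
    using basis_digits_in_digit_strings assms by auto
  moreover have "card (basis_digits d N ` {..<d ^ (N + 1)}) = card (digit_strings d N)"
    using card_image[OF inj_on_basis_digits] by (simp add: digit_strings_def card_PiE)
  ultimately have "basis_digits d N ` {..<d ^ (N + 1)} = digit_strings d N"
    by (simp add: card_subset_eq finite_digit_strings)
  then show ?thesis using inj_on_basis_digits by (simp add: bij_betw_def)
qed

lemma sum_basis_digits:
  "0 < d \<Longrightarrow> (\<Sum>m<d ^ (N + 1). F (basis_digits d N m)) = (\<Sum>x\<in>digit_strings d N. F x)"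
  using sum.reindex_bij_betw[OF bij_betw_basis_digits] by simp

lemma leading_digit_add_less_power:
  assumes "q < (d::nat)" "s < d ^ N" shows "q * d ^ N + s < d ^ (N + 1)"
proof -
  have "q * d ^ N + s < (q + 1) * d ^ N" using assms by simp
  also have "\<dots> \<le> d * d ^ N" using assms(1) by (intro mult_right_mono) auto
  finally show ?thesis by simp
qed

lemma dig_leading_digit_add:
  assumes "0 < d" "q < d" "s < d ^ N" "k \<le> N"
  shows "dig d N (q * d ^ N + s) k = (if k = 0 then q else dig d N s k)"
proof (cases "k = 0")
  case False
  define j where "j = N - k"
  have "j < N" using False assms(4) by (simp add: j_def)
  then have "d ^ N = d ^ j * d ^ (N - j)" by (simp flip: power_add)
  then have "(q * d ^ N + s) div d ^ j = (s + (q * d ^ (N - j)) * d ^ j) div d ^ j"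
    by (simp add: algebra_simps)
  then have "(q * d ^ N + s) div d ^ j = q * d ^ (N - j) + s div d ^ j"
    using assms(1) by simp
  moreover have "(q * d ^ (N - j) + s div d ^ j) mod d = s div d ^ j mod d"
    using \<open>j < N\<close> by (metis dvd_imp_mod_0 dvd_mult dvd_power mod_add_left_eq add_0 zero_less_diff)
  ultimately show ?thesis using False by (simp add: dig_def flip: j_def)
qed (use assms in \<open>simp add: dig_def\<close>)

lemma dig_mod_power:
  assumes "0 < d" "1 \<le> k" "k \<le> N" shows "dig d N (r mod d ^ N) k = dig d N r k"
proof -
  define j where "j = N - k"
  have "j < N" using assms by (simp add: j_def)
  then have "d ^ N = d ^ j * d ^ (N - j)" by (simp flip: power_add)
  then have "r mod d ^ N = r mod d ^ j + (r div d ^ j mod d ^ (N - j)) * d ^ j"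
    by (metis mod_mult2_eq add.commute mult.commute)
  then have "r mod d ^ N div d ^ j = r div d ^ j mod d ^ (N - j)"
    using assms(1) by simp
  moreover have "d dvd d ^ (N - j)" using \<open>j < N\<close> by simp
  ultimately show ?thesis by (simp add: dig_def mod_mod_cancel flip: j_def)
qed

lemma div_power_eq_dig0: "r < d ^ (N + 1) \<Longrightarrow> r div d ^ N = dig d N r 0"
  by (simp add: dig_def less_mult_imp_div_less mult.commute)

lemma dig_ptrans0_index:
  assumes "0 < d" "r < d ^ (N + 1)" "c < d ^ (N + 1)" "j \<le> N"
  shows "dig d N ((c div d ^ N) * d ^ N + r mod d ^ N) j = (if j = 0 then dig d N c 0 else dig d N r j)"
proof -
  have "c div d ^ N < d" using div_power_eq_dig0[OF assms(3)] dig_less[OF assms(1)] by metis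
  then show ?thesis
    using dig_leading_digit_add[OF assms(1) _ _ assms(4)] dig_mod_power[OF assms(1), of j N r] assms
      div_power_eq_dig0[OF assms(3)] by auto
qed

lemma basis_digits_leading_add:
  assumes d: "0 < d" and q: "q < d" and r: "r < d ^ N"
  shows "basis_digits d N (q * d ^ N + r) = (basis_digits d N r)(0 := q)"
proof
  fix k show "basis_digits d N (q * d ^ N + r) k = ((basis_digits d N r)(0 := q)) k"
    using dig_leading_digit_add[OF d q r, of k] by (cases "k \<le> N") (auto simp: basis_digits_def)
qed

lemma bij_betw_block_basis_digits:
  assumes d: "0 < d" and p: "p < d"
  shows "bij_betw (\<lambda>r. basis_digits d N (p * d ^ N + r)) {..<d ^ N} {x\<in>digit_strings d N. x 0 = p}"
proof -
  have "inj_on (\<lambda>r. basis_digits d N (p * d ^ N + r)) {..<d ^ N}"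
  proof (rule inj_onI)
    fix r r' assume "r \<in> {..<d ^ N}" "r' \<in> {..<d ^ N}"
      and "basis_digits d N (p * d ^ N + r) = basis_digits d N (p * d ^ N + r')"
    then have "p * d ^ N + r = p * d ^ N + r'"
      using leading_digit_add_less_power[OF p] by (intro inj_onD[OF inj_on_basis_digits]) auto
    then show "r = r'" by simp
  qed
  moreover have "(\<lambda>r. basis_digits d N (p * d ^ N + r)) ` {..<d ^ N} = {x\<in>digit_strings d N. x 0 = p}"
  proof (rule Set.set_eqI, rule iffI)
    fix x assume "x \<in> (\<lambda>r. basis_digits d N (p * d ^ N + r)) ` {..<d ^ N}"
    then obtain r where r: "r < d ^ N" and x: "x = basis_digits d N (p * d ^ N + r)" by blast
    have "x \<in> digit_strings d N" using basis_digits_in_digit_strings[OF d] x by simp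
    moreover have "x 0 = p" using basis_digits_leading_add[OF d p r] x by simp
    ultimately show "x \<in> {x\<in>digit_strings d N. x 0 = p}" by simp
  next
    fix x assume x: "x \<in> {x\<in>digit_strings d N. x 0 = p}"
    then obtain m where m: "m < d ^ (N + 1)" "x = basis_digits d N m"
      using bij_betw_basis_digits[OF d, of N] unfolding bij_betw_def by force
    then have "m div d ^ N = p" using div_power_eq_dig0[OF m(1)] x by (simp add: basis_digits_def)
    then have "p * d ^ N + m mod d ^ N = m" using div_mult_mod_eq[of m "d ^ N"] by simp
    then have "basis_digits d N m = basis_digits d N (p * d ^ N + m mod d ^ N)" by simp
    moreover have "m mod d ^ N < d ^ N" using d by simp
    ultimately show "x \<in> (\<lambda>r. basis_digits d N (p * d ^ N + r)) ` {..<d ^ N}"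
      using m(2) by (intro rev_image_eqI) auto
  qed
  ultimately show ?thesis by (simp add: bij_betw_def)
qed

lemma sum_block_basis_digits:
  assumes d: "0 < d" and p: "p < d" and q: "q < d"
  shows "(\<Sum>r<d ^ N. F (basis_digits d N (p * d ^ N + r)) (basis_digits d N (q * d ^ N + r))) =
    (\<Sum>x\<in>{x\<in>digit_strings d N. x 0 = p}. F x (x(0 := q)))"
proof -
  have "basis_digits d N (q * d ^ N + r) = (basis_digits d N (p * d ^ N + r))(0 := q)" if "r < d ^ N" for r
    using basis_digits_leading_add[OF d _ that] p q by simp
  then have "(\<Sum>r<d ^ N. F (basis_digits d N (p * d ^ N + r)) (basis_digits d N (q * d ^ N + r))) =
      (\<Sum>r<d ^ N. (\<lambda>x. F x (x(0 := q))) (basis_digits d N (p * d ^ N + r)))"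
    by simp
  also have "\<dots> = (\<Sum>x\<in>{x\<in>digit_strings d N. x 0 = p}. F x (x(0 := q)))"
    by (rule sum.reindex_bij_betw[OF bij_betw_block_basis_digits[OF d p]])
  finally show ?thesis .
qed


section \<open>The sets \<open>\<Sigma>\<^sub>a\<^sub>b\<close>\<close>

lemma Sigma_abD:
  assumes "\<sigma> \<in> Sigma_ab N a b"
  shows "\<sigma> permutes {0..N}" "\<sigma> 0 = a" "\<sigma> b = 0"
  using assms by (auto simp: Sigma_ab_def)

lemma Sigma_ab_image_inner:
  assumes "\<sigma> \<in> Sigma_ab N a b" "k \<in> {1..N} - {b}"
  shows "\<sigma> k \<in> {1..N} - {a}"
proof -
  note \<sigma> = Sigma_abD[OF assms(1)]
  have "\<sigma> k \<in> {0..N}" using permutes_in_image[OF \<sigma>(1)] assms(2) by auto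
  moreover have "\<sigma> k \<noteq> \<sigma> b" "\<sigma> k \<noteq> \<sigma> 0"
    using permutes_inj[OF \<sigma>(1)] assms(2) by (auto dest: injD)
  ultimately show ?thesis using \<sigma>(2,3) by auto
qed

lemma bij_betw_permutations_Sigma_ab:
  assumes a: "a \<in> {1..N}" and b: "b \<in> {1..N}"
  shows "bij_betw (\<lambda>p. transpose 0 a \<circ> transpose a b \<circ> p) {p. p permutes {1..N} - {b}} (Sigma_ab N a b)"
proof (rule bij_betw_byWitness[where f' = "\<lambda>\<sigma>. transpose a b \<circ> transpose 0 a \<circ> \<sigma>"])
  have swaps: "transpose a b permutes {0..N}" "transpose 0 a permutes {0..N}"
    using a b by (auto intro: permutes_swap_id)
  have "transpose 0 a \<circ> transpose a b \<circ> p \<in> Sigma_ab N a b" if "p \<in> {p. p permutes {1..N} - {b}}" for p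
  proof -
    have "p permutes {0..N}" using that by (auto intro: permutes_subset)
    moreover have "p 0 = 0" "p b = b" using that by (auto intro: permutes_not_in)
    ultimately show ?thesis using a b swaps by (simp add: Sigma_ab_def permutes_compose)
  qed
  then show "(\<lambda>p. transpose 0 a \<circ> transpose a b \<circ> p) ` {p. p permutes {1..N} - {b}} \<subseteq> Sigma_ab N a b"
    by blast
  have "transpose a b \<circ> transpose 0 a \<circ> \<sigma> \<in> {p. p permutes {1..N} - {b}}" if "\<sigma> \<in> Sigma_ab N a b" for \<sigma>
  proof -
    note \<sigma> = Sigma_abD[OF that]
    have "transpose a b \<circ> transpose 0 a \<circ> \<sigma> permutes {0..N}"
      by (intro permutes_compose swaps \<sigma>(1))
    moreover have "(transpose a b \<circ> transpose 0 a \<circ> \<sigma>) x = x" if "x \<in> {0..N} - ({1..N} - {b})" for x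
      using that \<sigma> a b by (cases "x = 0") auto
    ultimately show ?thesis using permutes_superset by blast
  qed
  then show "(\<lambda>\<sigma>. transpose a b \<circ> transpose 0 a \<circ> \<sigma>) ` Sigma_ab N a b \<subseteq> {p. p permutes {1..N} - {b}}"
    by blast
qed (auto simp: fun_eq_iff)

lemma
  assumes "a \<in> {1..N}" "b \<in> {1..N}"
  shows finite_Sigma_ab: "finite (Sigma_ab N a b)"
    and card_Sigma_ab: "card (Sigma_ab N a b) = fact (N - 1)"
proof -
  note bij = bij_betw_permutations_Sigma_ab[OF assms]
  show "finite (Sigma_ab N a b)"
    using bij_betw_finite[OF bij] finite_permutations[of "{1..N} - {b}"] by simp
  have "card {p. p permutes {1..N} - {b}} = fact (N - 1)"
    using assms(2) by (intro card_permutations) auto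
  then show "card (Sigma_ab N a b) = fact (N - 1)"
    using bij_betw_same_card[OF bij] by simp
qed

lemma bij_betw_Sigma_ab_compose:
  assumes a: "a \<in> {1..N}" and b: "b \<in> {1..N}" and a': "a' \<in> {1..N}" and b': "b' \<in> {1..N}"
    and \<sigma>': "\<sigma>' \<in> Sigma_ab N a' b'"
  shows "bij_betw (\<lambda>\<sigma>. \<sigma> \<circ> transpose a' b \<circ> \<sigma>' \<circ> transpose 0 b') (Sigma_ab N a b) (Sigma_ab N a b')"
proof -
  let ?f = "\<lambda>\<sigma>. \<sigma> \<circ> transpose a' b \<circ> \<sigma>' \<circ> transpose 0 b'"
  let ?g = "\<lambda>\<theta>. \<theta> \<circ> transpose 0 b' \<circ> inv_into UNIV \<sigma>' \<circ> transpose a' b"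
  note \<sigma>'' = Sigma_abD[OF \<sigma>']
  have swaps: "transpose a' b permutes {0..N}" "transpose 0 b' permutes {0..N}"
    using a' b b' by (auto intro: permutes_swap_id)
  have inv: "inv_into UNIV \<sigma>' permutes {0..N}" "inv_into UNIV \<sigma>' 0 = b'" "inv_into UNIV \<sigma>' a' = 0"
    using \<sigma>'' permutes_inv[OF \<sigma>''(1)] permutes_inv_eq[OF \<sigma>''(1)] by auto
  show ?thesis
  proof (rule bij_betw_byWitness[where f' = ?g])
    show "\<forall>\<sigma>\<in>Sigma_ab N a b. ?g (?f \<sigma>) = \<sigma>" "\<forall>\<theta>\<in>Sigma_ab N a b'. ?f (?g \<theta>) = \<theta>"
      by (auto simp: fun_eq_iff permutes_inverses[OF \<sigma>''(1)])
    show "?f ` Sigma_ab N a b \<subseteq> Sigma_ab N a b'"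
      using \<sigma>'' swaps a a' b b' by (auto simp: Sigma_ab_def intro!: permutes_compose)
    show "?g ` Sigma_ab N a b' \<subseteq> Sigma_ab N a b"
      using inv swaps a a' b b' by (auto simp: Sigma_ab_def intro!: permutes_compose)
  qed
qed

lemma inv_into_in_Sigma_ab: "\<sigma> \<in> Sigma_ab N a b \<Longrightarrow> inv_into UNIV \<sigma> \<in> Sigma_ab N b a"
  using permutes_inv permutes_inv_eq by (fastforce simp: Sigma_ab_def)

lemma bij_betw_inv_Sigma_ab: "bij_betw (inv_into UNIV) (Sigma_ab N a b) (Sigma_ab N b a)"
  by (rule bij_betw_byWitness[where f' = "inv_into UNIV"])
    (use inv_into_in_Sigma_ab permutes_inv_inv Sigma_abD(1) in blast)+

lemma Sigma_ab_transpose_0: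
  assumes \<sigma>: "\<sigma> \<in> Sigma_ab N a b" and a: "a \<in> {1..N}"
  shows "transpose 0 a \<circ> \<sigma> permutes {1..N}"
    and "k \<in> {1..N} - {b} \<Longrightarrow> (transpose 0 a \<circ> \<sigma>) k = \<sigma> k"
    and "(transpose 0 a \<circ> \<sigma>) b = a"
proof -
  note \<sigma>' = Sigma_abD[OF \<sigma>]
  have "transpose 0 a \<circ> \<sigma> permutes {0..N}"
    using a by (intro permutes_compose \<sigma>'(1) permutes_swap_id) auto
  moreover have "{0..N} - {1..N} = {0}" by auto
  then have "\<forall>x\<in>{0..N} - {1..N}. (transpose 0 a \<circ> \<sigma>) x = x" using \<sigma>' by simp
  ultimately show "transpose 0 a \<circ> \<sigma> permutes {1..N}" using permutes_superset by blast
  show "(transpose 0 a \<circ> \<sigma>) k = \<sigma> k" if "k \<in> {1..N} - {b}"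
    using Sigma_ab_image_inner[OF \<sigma> that] by auto
  show "(transpose 0 a \<circ> \<sigma>) b = a" using \<sigma>' by simp
qed


section \<open>Matrix entries of the partially transposed permutation operators\<close>

definition ptrans_perm_rel ::
    "nat \<Rightarrow> nat \<Rightarrow> nat \<Rightarrow> (nat \<Rightarrow> nat) \<Rightarrow> (nat \<Rightarrow> nat) \<Rightarrow> (nat \<Rightarrow> nat) \<Rightarrow> bool" where
  "ptrans_perm_rel N a b \<sigma> x y \<longleftrightarrow> x a = x 0 \<and> y b = y 0 \<and> (\<forall>k\<in>{1..N} - {b}. x (\<sigma> k) = y k)"

lemma ptrans0_perm_op_entry:
  assumes d: "0 < d" and r: "r < d ^ (N + 1)" and c: "c < d ^ (N + 1)"
    and \<sigma>: "\<sigma> \<in> Sigma_ab N a b" and a: "a \<in> {1..N}" and b: "b \<in> {1..N}"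
  shows "ptrans0 d N (perm_op d N \<sigma>) $$ (r, c) =
    (if ptrans_perm_rel N a b \<sigma> (basis_digits d N r) (basis_digits d N c) then 1 else 0)"
proof -
  define row where "row = (c div d ^ N) * d ^ N + r mod d ^ N"
  define col where "col = (r div d ^ N) * d ^ N + c mod d ^ N"
  have "row < d ^ (N + 1)" "col < d ^ (N + 1)" unfolding row_def col_def
    using leading_digit_add_less_power div_power_eq_dig0 r c dig_less[OF d] d by auto
  then have entry: "ptrans0 d N (perm_op d N \<sigma>) $$ (r, c) =
      (if \<forall>k\<le>N. dig d N row (\<sigma> k) = dig d N col k then 1 else 0)"
    using r c by (simp add: ptrans0_def perm_op_def row_def col_def)
  have row_dig: "dig d N row j = (if j = 0 then dig d N c 0 else dig d N r j)" if "j \<le> N" for j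
    unfolding row_def using dig_ptrans0_index[OF d r c that] .
  have col_dig: "dig d N col j = (if j = 0 then dig d N r 0 else dig d N c j)" if "j \<le> N" for j
    unfolding col_def using dig_ptrans0_index[OF d c r that] .
  note \<sigma>' = Sigma_abD[OF \<sigma>]
  have "(\<forall>k\<le>N. dig d N row (\<sigma> k) = dig d N col k) \<longleftrightarrow>
      dig d N r a = dig d N r 0 \<and> dig d N c b = dig d N c 0 \<and>
      (\<forall>k\<in>{1..N} - {b}. dig d N r (\<sigma> k) = dig d N c k)" (is "?lhs \<longleftrightarrow> ?rhs")
  proof
    assume ?lhs
    then show ?rhs
      using spec[of _ 0] spec[of _ b] row_dig col_dig Sigma_ab_image_inner[OF \<sigma>] \<sigma>' a b
      by (metis (no_types, lifting) Diff_iff atLeastAtMost_iff le0 not_one_le_zero)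
  next
    assume ?rhs
    moreover have "k = 0 \<or> k = b \<or> k \<in> {1..N} - {b}" if "k \<le> N" for k
      using that by auto
    ultimately show ?lhs
      using row_dig col_dig Sigma_ab_image_inner[OF \<sigma>] \<sigma>' a b by fastforce
  qed
  also have "\<dots> \<longleftrightarrow> ptrans_perm_rel N a b \<sigma> (basis_digits d N r) (basis_digits d N c)"
    unfolding ptrans_perm_rel_def basis_digits_def using a b Sigma_ab_image_inner[OF \<sigma>] by auto
  finally show ?thesis using entry by simp
qed

definition Sigma_kernel :: "nat \<Rightarrow> nat \<Rightarrow> nat \<Rightarrow> (nat \<Rightarrow> nat) \<Rightarrow> (nat \<Rightarrow> nat) \<Rightarrow> real" where
  "Sigma_kernel N a b x y = (\<Sum>\<sigma>\<in>Sigma_ab N a b. if ptrans_perm_rel N a b \<sigma> x y then 1 else 0)"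

definition Ctilde_kernel :: "nat \<Rightarrow> (nat \<Rightarrow> real) \<Rightarrow> (nat \<Rightarrow> nat) \<Rightarrow> (nat \<Rightarrow> nat) \<Rightarrow> real" where
  "Ctilde_kernel N \<beta> x y = (\<Sum>a\<in>{1..N}. \<Sum>b\<in>{1..N}. \<beta> a * \<beta> b / fact (N - 1) * Sigma_kernel N a b x y)"

lemma Ctilde_carrier: "Ctilde d N \<beta> \<in> carrier_mat (d ^ (N + 1)) (d ^ (N + 1))"
  by (simp add: Ctilde_def)

lemma Ctilde_index:
  assumes d: "0 < d" and r: "r < d ^ (N + 1)" and c: "c < d ^ (N + 1)"
  shows "Ctilde d N \<beta> $$ (r, c) = complex_of_real (Ctilde_kernel N \<beta> (basis_digits d N r) (basis_digits d N c))"
proof -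
  have "Ctilde d N \<beta> $$ (r, c) = (\<Sum>a\<in>{1..N}. \<Sum>b\<in>{1..N}. \<Sum>\<sigma>\<in>Sigma_ab N a b.
      complex_of_real (\<beta> a * \<beta> b / fact (N - 1)) * ptrans0 d N (perm_op d N \<sigma>) $$ (r, c))"
    using r c by (simp add: Ctilde_def)
  also have "\<dots> = (\<Sum>a\<in>{1..N}. \<Sum>b\<in>{1..N}. \<Sum>\<sigma>\<in>Sigma_ab N a b.
      complex_of_real (\<beta> a * \<beta> b / fact (N - 1) *
        (if ptrans_perm_rel N a b \<sigma> (basis_digits d N r) (basis_digits d N c) then 1 else 0)))"
    by (intro sum.cong refl) (simp add: ptrans0_perm_op_entry[OF d r c])
  also have "\<dots> = complex_of_real (Ctilde_kernel N \<beta> (basis_digits d N r) (basis_digits d N c))"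
    unfolding Ctilde_kernel_def Sigma_kernel_def of_real_sum sum_distrib_left ..
  finally show ?thesis .
qed


section \<open>The square of \<open>Ctilde\<close>\<close>

definition ptrans_perm_image :: "nat \<Rightarrow> (nat \<Rightarrow> nat) \<Rightarrow> nat \<Rightarrow> (nat \<Rightarrow> nat) \<Rightarrow> nat \<Rightarrow> nat \<Rightarrow> nat" where
  "ptrans_perm_image N \<sigma> b x i = (\<lambda>k\<in>{0..N}. if k = 0 \<or> k = b then i else x (\<sigma> k))"

lemma ptrans_perm_rel_iff_image:
  assumes "b \<in> {1..N}" "y \<in> digit_strings d N"
  shows "ptrans_perm_rel N a b \<sigma> x y \<longleftrightarrow> x a = x 0 \<and> y = ptrans_perm_image N \<sigma> b x (y 0)"
proof
  assume rel: "ptrans_perm_rel N a b \<sigma> x y"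
  have "y = ptrans_perm_image N \<sigma> b x (y 0)"
  proof (rule extensionalityI[of _ "{0..N}"])
    show "y \<in> extensional {0..N}" using assms(2) by (simp add: digit_strings_def PiE_def)
    show "ptrans_perm_image N \<sigma> b x (y 0) \<in> extensional {0..N}" by (simp add: ptrans_perm_image_def)
    show "y k = ptrans_perm_image N \<sigma> b x (y 0) k" if "k \<in> {0..N}" for k
      using rel that by (auto simp: ptrans_perm_rel_def ptrans_perm_image_def)
  qed
  then show "x a = x 0 \<and> y = ptrans_perm_image N \<sigma> b x (y 0)"
    using rel by (simp add: ptrans_perm_rel_def)
next
  assume H: "x a = x 0 \<and> y = ptrans_perm_image N \<sigma> b x (y 0)"
  have y: "y k = ptrans_perm_image N \<sigma> b x (y 0) k" for k
    using fun_cong[OF conjunct2[OF H]] .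
  have "y b = y 0" using y[of b] assms(1) by (simp add: ptrans_perm_image_def)
  moreover have "x (\<sigma> k) = y k" if "k \<in> {1..N} - {b}" for k
    using y[of k] that by (simp add: ptrans_perm_image_def)
  ultimately show "ptrans_perm_rel N a b \<sigma> x y" using H by (simp add: ptrans_perm_rel_def)
qed

lemma ptrans_perm_image_in_digit_strings:
  assumes "\<sigma> \<in> Sigma_ab N a b" "x \<in> digit_strings d N" "i < d"
  shows "ptrans_perm_image N \<sigma> b x i \<in> digit_strings d N"
  using assms permutes_in_image[OF Sigma_abD(1)[OF assms(1)]]
  by (auto simp: ptrans_perm_image_def mem_digit_strings_iff)

lemma ptrans_perm_image_0 [simp]: "ptrans_perm_image N \<sigma> b x i 0 = i"
  by (simp add: ptrans_perm_image_def)

lemma inj_ptrans_perm_image: "inj (ptrans_perm_image N \<sigma> b x)"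
  by (rule injI) (metis ptrans_perm_image_0)

lemma ptrans_perm_rel_image_iff:
  assumes \<sigma>': "\<sigma>' \<in> Sigma_ab N a' b'" and a': "a' \<in> {1..N}"
  shows "ptrans_perm_rel N a' b' \<sigma>' (ptrans_perm_image N \<sigma> b x i) z \<longleftrightarrow>
    (b = a' \<or> i = x (\<sigma> a')) \<and> z b' = z 0 \<and>
    (\<forall>k\<in>{1..N} - {b'}. x ((\<sigma> \<circ> transpose a' b \<circ> \<sigma>' \<circ> transpose 0 b') k) = z k)"
proof -
  let ?y = "ptrans_perm_image N \<sigma> b x i"
  have "?y a' = ?y 0 \<longleftrightarrow> b = a' \<or> i = x (\<sigma> a')"
    using a' by (auto simp: ptrans_perm_image_def)
  moreover have "(\<forall>k\<in>{1..N} - {b'}. ?y (\<sigma>' k) = z k) \<longleftrightarrow>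
      (\<forall>k\<in>{1..N} - {b'}. x ((\<sigma> \<circ> transpose a' b \<circ> \<sigma>' \<circ> transpose 0 b') k) = z k)"
    if "b = a' \<or> i = x (\<sigma> a')"
  proof (intro ball_cong refl)
    fix k assume k: "k \<in> {1..N} - {b'}"
    then have "\<sigma>' k \<in> {1..N} - {a'}" by (rule Sigma_ab_image_inner[OF \<sigma>'])
    then have "?y (\<sigma>' k) = x ((\<sigma> \<circ> transpose a' b \<circ> \<sigma>' \<circ> transpose 0 b') k)"
      using that k by (auto simp: ptrans_perm_image_def)
    then show "(?y (\<sigma>' k) = z k) = (x ((\<sigma> \<circ> transpose a' b \<circ> \<sigma>' \<circ> transpose 0 b') k) = z k)"
      by simp
  qed
  ultimately show ?thesis
    unfolding ptrans_perm_rel_def by blast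
qed

lemma ptrans_perm_paths_eq:
  assumes \<sigma>: "\<sigma> \<in> Sigma_ab N a b" and \<sigma>': "\<sigma>' \<in> Sigma_ab N a' b'"
    and b: "b \<in> {1..N}" and a': "a' \<in> {1..N}" and x: "x \<in> digit_strings d N"
  shows "{y\<in>digit_strings d N. ptrans_perm_rel N a b \<sigma> x y \<and> ptrans_perm_rel N a' b' \<sigma>' y z} =
    ptrans_perm_image N \<sigma> b x ` {i. i < d \<and> (b = a' \<or> i = x (\<sigma> a')) \<and>
      ptrans_perm_rel N a b' (\<sigma> \<circ> transpose a' b \<circ> \<sigma>' \<circ> transpose 0 b') x z}"
    (is "?paths = ?img ` ?I")
proof (rule Set.set_eqI, rule iffI)
  note image_iff = ptrans_perm_rel_image_iff[OF \<sigma>' a']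
  fix y assume "y \<in> ?paths"
  then have y: "y \<in> digit_strings d N" "ptrans_perm_rel N a b \<sigma> x y" "ptrans_perm_rel N a' b' \<sigma>' y z"
    by auto
  define i where "i = y 0"
  have "x a = x 0 \<and> y = ?img (y 0)" using y(2) ptrans_perm_rel_iff_image[OF b y(1)] by blast
  then have xa: "x a = x 0" and y_eq: "y = ?img i" unfolding i_def by blast+
  have "i < d" using y(1) by (simp add: mem_digit_strings_iff i_def)
  moreover have "ptrans_perm_rel N a' b' \<sigma>' (?img i) z" using y(3) y_eq by simp
  ultimately have "i \<in> ?I" using xa image_iff by (simp add: ptrans_perm_rel_def)
  then show "y \<in> ?img ` ?I" using y_eq by blast
next
  note image_iff = ptrans_perm_rel_image_iff[OF \<sigma>' a']
  fix y assume "y \<in> ?img ` ?I"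
  then obtain i where i: "i \<in> ?I" and y: "y = ?img i" by blast
  then have i': "i < d" "b = a' \<or> i = x (\<sigma> a')" "x a = x 0" "z b' = z 0"
    "\<forall>k\<in>{1..N} - {b'}. x ((\<sigma> \<circ> transpose a' b \<circ> \<sigma>' \<circ> transpose 0 b') k) = z k"
    unfolding ptrans_perm_rel_def by auto
  have "?img i \<in> digit_strings d N" using ptrans_perm_image_in_digit_strings[OF \<sigma> x i'(1)] .
  moreover have "ptrans_perm_rel N a b \<sigma> x (?img i)"
    using ptrans_perm_rel_iff_image[OF b calculation] i'(3) by simp
  moreover have "ptrans_perm_rel N a' b' \<sigma>' (?img i) z" using image_iff i' by simp
  ultimately show "y \<in> ?paths" using y by simp
qed

lemma card_ptrans_perm_paths:
  assumes \<sigma>: "\<sigma> \<in> Sigma_ab N a b" and \<sigma>': "\<sigma>' \<in> Sigma_ab N a' b'"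
    and b: "b \<in> {1..N}" and a': "a' \<in> {1..N}" and x: "x \<in> digit_strings d N"
  shows "card {y\<in>digit_strings d N. ptrans_perm_rel N a b \<sigma> x y \<and> ptrans_perm_rel N a' b' \<sigma>' y z} =
    (if b = a' then d else 1) *
    (if ptrans_perm_rel N a b' (\<sigma> \<circ> transpose a' b \<circ> \<sigma>' \<circ> transpose 0 b') x z then 1 else 0)"
proof -
  let ?R = "ptrans_perm_rel N a b' (\<sigma> \<circ> transpose a' b \<circ> \<sigma>' \<circ> transpose 0 b') x z"
  let ?I = "{i. i < d \<and> (b = a' \<or> i = x (\<sigma> a')) \<and> ?R}"
  have "x (\<sigma> a') < d"
    using x a' permutes_in_image[OF Sigma_abD(1)[OF \<sigma>]] by (auto simp: mem_digit_strings_iff)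
  then have "?I = (if ?R then if b = a' then {..<d} else {x (\<sigma> a')} else {})"
    by auto
  then have "card ?I = (if b = a' then d else 1) * (if ?R then 1 else 0)"
    by simp
  moreover have "card (ptrans_perm_image N \<sigma> b x ` ?I) = card ?I"
    by (rule card_image[OF inj_on_subset[OF inj_ptrans_perm_image subset_UNIV]])
  ultimately show ?thesis unfolding ptrans_perm_paths_eq[OF assms] by simp
qed

lemma sum_Sigma_kernel_mult:
  assumes a: "a \<in> {1..N}" and b: "b \<in> {1..N}" and a': "a' \<in> {1..N}" and b': "b' \<in> {1..N}"
    and x: "x \<in> digit_strings d N"
  shows "(\<Sum>y\<in>digit_strings d N. Sigma_kernel N a b x y * Sigma_kernel N a' b' y z) =
    (if b = a' then real d else 1) * fact (N - 1) * Sigma_kernel N a b' x z"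
proof -
  let ?S = "Sigma_ab N a b" and ?S' = "Sigma_ab N a' b'" and ?Y = "digit_strings d N"
  let ?\<kappa> = "if b = a' then real d else 1"
  let ?rel = "\<lambda>\<sigma> \<sigma>' y. ptrans_perm_rel N a b \<sigma> x y \<and> ptrans_perm_rel N a' b' \<sigma>' y z"
  let ?\<theta> = "\<lambda>\<sigma> \<sigma>'. \<sigma> \<circ> transpose a' b \<circ> \<sigma>' \<circ> transpose 0 b'"
  have "(\<Sum>y\<in>?Y. Sigma_kernel N a b x y * Sigma_kernel N a' b' y z) =
      (\<Sum>y\<in>?Y. \<Sum>\<sigma>\<in>?S. \<Sum>\<sigma>'\<in>?S'. if ?rel \<sigma> \<sigma>' y then 1 else 0)"
    unfolding Sigma_kernel_def sum_product by (intro sum.cong refl) simp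
  also have "\<dots> = (\<Sum>\<sigma>\<in>?S. \<Sum>\<sigma>'\<in>?S'. \<Sum>y\<in>?Y. if ?rel \<sigma> \<sigma>' y then 1 else 0)"
    by (subst sum.swap) (simp add: sum.swap[of _ ?Y])
  also have "\<dots> = (\<Sum>\<sigma>\<in>?S. \<Sum>\<sigma>'\<in>?S'. ?\<kappa> * (if ptrans_perm_rel N a b' (?\<theta> \<sigma> \<sigma>') x z then 1 else 0))"
    using card_ptrans_perm_paths[OF _ _ b a' x]
    by (intro sum.cong refl) (simp add: sum_if_eq_card finite_digit_strings)
  also have "\<dots> = ?\<kappa> * (\<Sum>\<sigma>'\<in>?S'. \<Sum>\<sigma>\<in>?S. if ptrans_perm_rel N a b' (?\<theta> \<sigma> \<sigma>') x z then 1 else 0)"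
    by (subst sum.swap) (simp add: sum_distrib_left)
  also have "\<dots> = ?\<kappa> * (\<Sum>\<sigma>'\<in>?S'. Sigma_kernel N a b' x z)"
  proof -
    have "(\<Sum>\<sigma>\<in>?S. if ptrans_perm_rel N a b' (?\<theta> \<sigma> \<sigma>') x z then 1 else 0) = Sigma_kernel N a b' x z"
      if "\<sigma>' \<in> ?S'" for \<sigma>'
      using sum.reindex_bij_betw[OF bij_betw_Sigma_ab_compose[OF a b a' b' that],
          of "\<lambda>\<theta>. if ptrans_perm_rel N a b' \<theta> x z then 1 else 0"]
      by (simp add: Sigma_kernel_def)
    then show ?thesis by simp
  qed
  finally show ?thesis using card_Sigma_ab[OF a' b'] by simp
qed

lemma sum_Ctilde_kernel_mult:
  assumes x: "x \<in> digit_strings d N"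
  shows "(\<Sum>y\<in>digit_strings d N. Ctilde_kernel N \<beta> x y * Ctilde_kernel N \<beta> y z) =
    ((real d - 1) * (\<Sum>i=1..N. (\<beta> i)\<^sup>2) + (\<Sum>i=1..N. \<beta> i)\<^sup>2) * Ctilde_kernel N \<beta> x z"
proof -
  let ?I = "{1..N}" and ?f = "fact (N - 1) :: real" and ?K = "Sigma_kernel N"
  have "(\<Sum>y\<in>digit_strings d N. Ctilde_kernel N \<beta> x y * Ctilde_kernel N \<beta> y z) =
      (\<Sum>a\<in>?I. \<Sum>a'\<in>?I. \<Sum>b\<in>?I. \<Sum>b'\<in>?I. \<beta> a * \<beta> b / ?f * (\<beta> a' * \<beta> b' / ?f) *
        (\<Sum>y\<in>digit_strings d N. ?K a b x y * ?K a' b' y z))"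
    unfolding Ctilde_kernel_def sum_mult_sum_swap
    by (simp add: sum_distrib_left sum_divide_distrib mult_ac)
  also have "\<dots> = (\<Sum>a\<in>?I. \<Sum>a'\<in>?I. \<Sum>b\<in>?I. \<Sum>b'\<in>?I.
      (\<beta> a * \<beta> b' / ?f * ?K a b' x z) * (\<beta> b * \<beta> a' * (if b = a' then real d else 1)))"
    by (intro sum.cong refl) (simp add: sum_Sigma_kernel_mult[OF _ _ _ _ x])
  also have "\<dots> = (\<Sum>a\<in>?I. \<Sum>b'\<in>?I. \<beta> a * \<beta> b' / ?f * ?K a b' x z) *
      (\<Sum>b\<in>?I. \<Sum>a'\<in>?I. \<beta> b * \<beta> a' * (if b = a' then real d else 1))"
    by (rule sum_quadruple_separate)
  finally show ?thesis by (simp add: sum_sum_if_eq Ctilde_kernel_def)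
qed

lemma Ctilde_square:
  assumes d: "0 < d"
  shows "Ctilde d N \<beta> * Ctilde d N \<beta> =
    complex_of_real ((real d - 1) * (\<Sum>i=1..N. (\<beta> i)\<^sup>2) + (\<Sum>i=1..N. \<beta> i)\<^sup>2) \<cdot>\<^sub>m Ctilde d N \<beta>"
    (is "?C * ?C = complex_of_real ?l \<cdot>\<^sub>m ?C")
proof (rule eq_matI)
  let ?K = "Ctilde_kernel N \<beta>" and ?x = "basis_digits d N"
  fix r c assume "r < dim_row (complex_of_real ?l \<cdot>\<^sub>m ?C)" "c < dim_col (complex_of_real ?l \<cdot>\<^sub>m ?C)"
  then have r: "r < d ^ (N + 1)" and c: "c < d ^ (N + 1)" by (simp_all add: Ctilde_def)
  have "(?C * ?C) $$ (r, c) = (\<Sum>m<d ^ (N + 1). ?C $$ (r, m) * ?C $$ (m, c))"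
    using r c by (simp add: Ctilde_def scalar_prod_def lessThan_atLeast0)
  also have "\<dots> = complex_of_real (\<Sum>y\<in>digit_strings d N. ?K (?x r) y * ?K y (?x c))"
    by (simp add: Ctilde_index[OF d r] Ctilde_index[OF d _ c] sum_basis_digits[OF d, symmetric]
        flip: of_real_sum of_real_mult)
  also have "\<dots> = (complex_of_real ?l \<cdot>\<^sub>m ?C) $$ (r, c)"
    using r c by (simp add: sum_Ctilde_kernel_mult basis_digits_in_digit_strings[OF d]
        Ctilde_index[OF d r c] carrier_matD[OF Ctilde_carrier])
  finally show "(?C * ?C) $$ (r, c) = (complex_of_real ?l \<cdot>\<^sub>m ?C) $$ (r, c)" .
qed (simp_all add: Ctilde_def)


section \<open>Hermiticity and the projection criterion\<close>

lemma ptrans_perm_rel_inv_iff: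
  assumes \<sigma>: "\<sigma> \<in> Sigma_ab N a b"
  shows "ptrans_perm_rel N b a (inv_into UNIV \<sigma>) y x \<longleftrightarrow> ptrans_perm_rel N a b \<sigma> x y"
proof -
  have \<sigma>_inv: "inv_into UNIV \<sigma> \<in> Sigma_ab N b a" using inv_into_in_Sigma_ab[OF \<sigma>] .
  note inverses = permutes_inverses[OF Sigma_abD(1)[OF \<sigma>]]
  have "(\<forall>k\<in>{1..N} - {a}. y (inv_into UNIV \<sigma> k) = x k) \<longleftrightarrow> (\<forall>k\<in>{1..N} - {b}. x (\<sigma> k) = y k)"
    using Sigma_ab_image_inner[OF \<sigma>] Sigma_ab_image_inner[OF \<sigma>_inv] inverses by metis
  then show ?thesis unfolding ptrans_perm_rel_def by blast
qed

lemma Sigma_kernel_swap: "Sigma_kernel N b a y x = Sigma_kernel N a b x y"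
  unfolding Sigma_kernel_def
  using sum.reindex_bij_betw[OF bij_betw_inv_Sigma_ab,
      of "\<lambda>\<tau>. if ptrans_perm_rel N b a \<tau> y x then 1 else 0" N a b, symmetric]
  by (simp add: ptrans_perm_rel_inv_iff)

lemma Ctilde_kernel_swap: "Ctilde_kernel N \<beta> y x = Ctilde_kernel N \<beta> x y"
proof -
  have "Ctilde_kernel N \<beta> y x = (\<Sum>a\<in>{1..N}. \<Sum>b\<in>{1..N}. \<beta> b * \<beta> a / fact (N - 1) * Sigma_kernel N b a x y)"
    unfolding Ctilde_kernel_def by (intro sum.cong refl) (simp add: Sigma_kernel_swap mult.commute)
  then show ?thesis unfolding Ctilde_kernel_def by (subst sum.swap) simp
qed

lemma Ctilde_hermitian:
  assumes d: "0 < d"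
  shows "mat_adjoint (Ctilde d N \<beta>) = Ctilde d N \<beta>"
proof (rule eq_matI)
  fix i j assume "i < dim_row (Ctilde d N \<beta>)" "j < dim_col (Ctilde d N \<beta>)"
  then have i: "i < d ^ (N + 1)" and j: "j < d ^ (N + 1)" by (simp_all add: Ctilde_def)
  then have "mat_adjoint (Ctilde d N \<beta>) $$ (i, j) = conjugate (Ctilde d N \<beta> $$ (j, i))"
    by (simp add: mat_adjoint_def mat_of_rows_def Ctilde_def)
  then show "mat_adjoint (Ctilde d N \<beta>) $$ (i, j) = Ctilde d N \<beta> $$ (i, j)"
    using Ctilde_index[OF d i j] Ctilde_index[OF d j i] Ctilde_kernel_swap by simp
qed (simp_all add: mat_adjoint_def mat_of_rows_def Ctilde_def)

lemma Ctilde_kernel_diagonal: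
  assumes a0: "a0 \<in> {1..N}"
  defines "x \<equiv> \<lambda>k\<in>{0..N}. if k = 0 \<or> k = a0 then 1 else 0"
  shows "Ctilde_kernel N \<beta> x x = (\<beta> a0)\<^sup>2"
proof -
  have "Sigma_kernel N a b x x = (if a = a0 \<and> b = a0 then fact (N - 1) else 0)"
    if a: "a \<in> {1..N}" and b: "b \<in> {1..N}" for a b
  proof (cases "a = a0 \<and> b = a0")
    case True
    have "ptrans_perm_rel N a b \<sigma> x x" if \<sigma>: "\<sigma> \<in> Sigma_ab N a b" for \<sigma>
    proof -
      have "x (\<sigma> k) = x k" if "k \<in> {1..N} - {b}" for k
        using Sigma_ab_image_inner[OF \<sigma> that] that True by (auto simp: x_def)
      then show ?thesis using True a by (simp add: ptrans_perm_rel_def x_def)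
    qed
    then show ?thesis using card_Sigma_ab[OF a b] True by (simp add: Sigma_kernel_def)
  next
    case False
    then have "\<not> ptrans_perm_rel N a b \<sigma> x x" for \<sigma> using a b by (auto simp: ptrans_perm_rel_def x_def)
    then show ?thesis using False by (simp add: Sigma_kernel_def)
  qed
  then have "Ctilde_kernel N \<beta> x x =
      (\<Sum>a\<in>{1..N}. \<Sum>b\<in>{1..N}. if b = a0 then if a = a0 then \<beta> a0 * \<beta> a0 else 0 else 0)"
    unfolding Ctilde_kernel_def by (intro sum.cong refl) auto
  then show ?thesis using a0 by (simp add: power2_eq_square)
qed

lemma Ctilde_diagonal_nonzero:
  assumes d: "2 \<le> d" and a0: "a0 \<in> {1..N}" "\<beta> a0 \<noteq> 0"
  shows "\<exists>r<d ^ (N + 1). Ctilde d N \<beta> $$ (r, r) \<noteq> 0"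
proof -
  define x where "x = (\<lambda>k\<in>{0..N}. if k = 0 \<or> k = a0 then 1 else (0::nat))"
  have "x \<in> digit_strings d N" using d by (auto simp: x_def digit_strings_def)
  then obtain r where r: "r < d ^ (N + 1)" "basis_digits d N r = x"
    using bij_betw_basis_digits[of d N] d unfolding bij_betw_def by force
  moreover have "Ctilde d N \<beta> $$ (r, r) = complex_of_real ((\<beta> a0)\<^sup>2)"
    using Ctilde_index[of d r N r \<beta>] Ctilde_kernel_diagonal[OF a0(1), of \<beta>] r d
    unfolding x_def by simp
  ultimately show ?thesis using a0(2) by auto
qed

lemma orth_proj_Ctilde_iff:
  assumes d: "2 \<le> d" and a0: "a0 \<in> {1..N}" "\<beta> a0 \<noteq> 0"
  shows "orth_proj (Ctilde d N \<beta>) \<longleftrightarrow> (real d - 1) * (\<Sum>i=1..N. (\<beta> i)\<^sup>2) + (\<Sum>i=1..N. \<beta> i)\<^sup>2 = 1"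
    (is "orth_proj ?C \<longleftrightarrow> ?l = 1")
proof
  have sq: "?C * ?C = complex_of_real ?l \<cdot>\<^sub>m ?C" using d by (intro Ctilde_square) simp
  show "?l = 1" if "orth_proj ?C"
  proof -
    obtain r where r: "r < d ^ (N + 1)" and nz: "?C $$ (r, r) \<noteq> 0"
      using Ctilde_diagonal_nonzero[where \<beta> = \<beta>, OF d a0] by blast
    have "complex_of_real ?l * ?C $$ (r, r) = ?C $$ (r, r)"
      using sq that r carrier_matD[OF Ctilde_carrier] by (metis index_smult_mat(1) orth_proj_def)
    then have "complex_of_real ?l = 1" using nz by (simp only: mult_cancel_right2) simp
    then show ?thesis by (simp only: of_real_eq_1_iff)
  qed
  show "orth_proj ?C" if "?l = 1"
  proof -
    have "complex_of_real ?l \<cdot>\<^sub>m ?C = ?C" using that by (intro eq_matI) simp_all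
    then show ?thesis
      using sq Ctilde_hermitian carrier_matD[OF Ctilde_carrier] d by (simp add: orth_proj_def)
  qed
qed


section \<open>The partial trace of \<open>Cbeta\<close>\<close>

lemma ptrans_perm_rel_trace_iff:
  assumes \<sigma>: "\<sigma> \<in> Sigma_ab N a b" and a: "a \<in> {1..N}" and b: "b \<in> {1..N}"
  shows "x 0 = p \<and> ptrans_perm_rel N a b \<sigma> x (x(0 := q)) \<longleftrightarrow>
    p = q \<and> x 0 = p \<and> x a = p \<and> (\<forall>k\<in>{1..N}. x ((transpose 0 a \<circ> \<sigma>) k) = x k)"
proof -
  let ?\<pi> = "transpose 0 a \<circ> \<sigma>"
  note \<pi> = Sigma_ab_transpose_0[OF \<sigma> a]
  have "ptrans_perm_rel N a b \<sigma> x (x(0 := q)) \<longleftrightarrow>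
      x a = x 0 \<and> x b = q \<and> (\<forall>k\<in>{1..N} - {b}. x (?\<pi> k) = x k)"
    using b \<pi>(2) by (auto simp: ptrans_perm_rel_def)
  moreover have "x (?\<pi> b) = x b" if "\<forall>k\<in>{1..N} - {b}. x (?\<pi> k) = x k"
    using permutes_invariant_last[OF _ \<pi>(1) b that] by simp
  ultimately show ?thesis using \<pi>(3) by auto
qed

lemma card_digit_strings_leading:
  assumes "p < d"
  shows "card {x\<in>digit_strings d N. x 0 = p \<and> P (restrict x {1..N})} =
    card {y\<in>PiE {1..N} (\<lambda>_. {..<d}). P y}"
proof (rule bij_betw_same_card, rule bij_betw_byWitness[where f' = "\<lambda>y. y(0 := p)"])
  have restrict_upd: "restrict (y(0 := p)) {1..N} = y" if "y \<in> PiE {1..N} (\<lambda>_. {..<d})" for y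
    using that by (auto simp: fun_eq_iff PiE_iff extensional_def)
  show "\<forall>x\<in>{x\<in>digit_strings d N. x 0 = p \<and> P (restrict x {1..N})}. (restrict x {1..N})(0 := p) = x"
    by (auto simp: fun_eq_iff mem_digit_strings_iff)
  show "\<forall>y\<in>{y\<in>PiE {1..N} (\<lambda>_. {..<d}). P y}. restrict (y(0 := p)) {1..N} = y"
    using restrict_upd by blast
  show "(\<lambda>x. restrict x {1..N}) ` {x\<in>digit_strings d N. x 0 = p \<and> P (restrict x {1..N})} \<subseteq>
      {y\<in>PiE {1..N} (\<lambda>_. {..<d}). P y}"
    by (auto simp: mem_digit_strings_iff)
  show "(\<lambda>y. y(0 := p)) ` {y\<in>PiE {1..N} (\<lambda>_. {..<d}). P y} \<subseteq>
      {x\<in>digit_strings d N. x 0 = p \<and> P (restrict x {1..N})}"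
    using assms restrict_upd by (auto simp: mem_digit_strings_iff PiE_iff extensional_def)
qed

lemma card_trace_strings:
  assumes \<sigma>: "\<sigma> \<in> Sigma_ab N a b" and a: "a \<in> {1..N}" and b: "b \<in> {1..N}" and p: "p < d"
  shows "card {x\<in>digit_strings d N. x 0 = p \<and> ptrans_perm_rel N a b \<sigma> x (x(0 := q))} =
    (if p = q then card {y\<in>invariant_colourings d {1..N} (transpose 0 a \<circ> \<sigma>). y a = p} else 0)"
proof -
  let ?\<pi> = "transpose 0 a \<circ> \<sigma>"
  define P where "P y \<longleftrightarrow> y \<in> invariant_colourings d {1..N} ?\<pi> \<and> y a = p" for y
  have "?\<pi> k \<in> {1..N}" if "k \<in> {1..N}" for k
    using permutes_in_image[OF Sigma_ab_transpose_0(1)[OF \<sigma> a]] that by simp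
  then have "P (restrict x {1..N}) \<longleftrightarrow> x a = p \<and> (\<forall>k\<in>{1..N}. x (?\<pi> k) = x k)"
    if "x \<in> digit_strings d N" for x
    using that a by (auto simp: P_def invariant_colourings_def mem_digit_strings_iff)
  then have strings: "{x\<in>digit_strings d N. x 0 = p \<and> ptrans_perm_rel N a b \<sigma> x (x(0 := q))} =
      (if p = q then {x\<in>digit_strings d N. x 0 = p \<and> P (restrict x {1..N})} else {})"
    using ptrans_perm_rel_trace_iff[OF \<sigma> a b] by auto
  have colourings: "{y\<in>PiE {1..N} (\<lambda>_. {..<d}). P y} = {y\<in>invariant_colourings d {1..N} ?\<pi>. y a = p}"
    by (auto simp: P_def invariant_colourings_def)
  show ?thesis
  proof (cases "p = q")
    case True
    show ?thesis unfolding strings if_P[OF True] card_digit_strings_leading[OF p] colourings ..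
  qed (simp add: strings)
qed

lemma sum_card_invariant_colourings_Sigma_ab:
  assumes a: "a \<in> {1..N}" and b: "b \<in> {1..N}"
  shows "(\<Sum>\<sigma>\<in>Sigma_ab N a b. card (invariant_colourings d {1..N} (transpose 0 a \<circ> \<sigma>))) =
    (if a = b then d else 1) * pochhammer d (N - 1)"
proof -
  define S0 where "S0 = {1..N} - {b}"
  have S: "{1..N} = insert b S0" and bS: "b \<notin> S0" and fin: "finite S0" and cS: "card S0 = N - 1"
    using b by (auto simp: S0_def)
  have swaps: "transpose 0 a \<circ> (transpose 0 a \<circ> transpose a b \<circ> p) = transpose b a \<circ> p" for p :: "nat \<Rightarrow> nat"
    by (simp add: fun_eq_iff transpose_commute)
  have "(\<Sum>\<sigma>\<in>Sigma_ab N a b. card (invariant_colourings d {1..N} (transpose 0 a \<circ> \<sigma>))) =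
      (\<Sum>p | p permutes S0. card (invariant_colourings d (insert b S0) (transpose b a \<circ> p)))"
    using sum.reindex_bij_betw[OF bij_betw_permutations_Sigma_ab[OF a b, folded S0_def],
        of "\<lambda>\<sigma>. card (invariant_colourings d {1..N} (transpose 0 a \<circ> \<sigma>))"]
    by (simp only: swaps S)
  also have "\<dots> = (\<Sum>p | p permutes S0. (if a = b then d else 1) * card (invariant_colourings d S0 p))"
    using card_invariant_colourings_insert[OF fin bS _, of _ a] a S by (intro sum.cong refl) auto
  also have "\<dots> = (if a = b then d else 1) * pochhammer d (N - 1)"
    by (simp add: sum_distrib_left[symmetric] sum_card_invariant_colourings[OF fin] cS)
  finally show ?thesis .
qed

lemma sum_Sigma_kernel_trace:
  assumes d: "0 < d" and a: "a \<in> {1..N}" and b: "b \<in> {1..N}" and p: "p < d"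
  shows "(\<Sum>x\<in>{x\<in>digit_strings d N. x 0 = p}. Sigma_kernel N a b x (x(0 := q))) =
    (if p = q then (if a = b then real d else 1) * real (pochhammer d (N - 1)) / real d else 0)"
proof -
  let ?X = "{x\<in>digit_strings d N. x 0 = p}"
  let ?inv = "\<lambda>\<sigma>. invariant_colourings d {1..N} (transpose 0 a \<circ> \<sigma>)"
  have "(\<Sum>x\<in>?X. if ptrans_perm_rel N a b \<sigma> x (x(0 := q)) then 1 else 0) =
      (if p = q then real (card (?inv \<sigma>)) / real d else 0)" if \<sigma>: "\<sigma> \<in> Sigma_ab N a b" for \<sigma>
  proof -
    have "d * card {y\<in>?inv \<sigma>. y a = p} = card (?inv \<sigma>)"
      using Sigma_ab_transpose_0(1)[OF \<sigma> a] a p by (intro card_invariant_colourings_value) simp_all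
    then have "real (card {y\<in>?inv \<sigma>. y a = p}) = real (card (?inv \<sigma>)) / real d"
      using d by (simp add: field_simps flip: of_nat_mult)
    then show ?thesis
      using card_trace_strings[OF \<sigma> a b p, of q]
      by (cases "p = q") (simp_all add: sum_if_eq_card finite_digit_strings conj_assoc)
  qed
  then have "(\<Sum>x\<in>?X. Sigma_kernel N a b x (x(0 := q))) =
      (\<Sum>\<sigma>\<in>Sigma_ab N a b. if p = q then real (card (?inv \<sigma>)) / real d else 0)"
    unfolding Sigma_kernel_def by (subst sum.swap) simp
  also have "\<dots> = (if p = q then real (\<Sum>\<sigma>\<in>Sigma_ab N a b. card (?inv \<sigma>)) / real d else 0)"
    by (simp add: sum_divide_distrib)
  also have "\<dots> = (if p = q then (if a = b then real d else 1) * real (pochhammer d (N - 1)) / real d else 0)"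
    unfolding sum_card_invariant_colourings_Sigma_ab[OF a b] by simp
  finally show ?thesis .
qed

lemma sum_Ctilde_kernel_trace:
  assumes d: "0 < d" and p: "p < d"
  shows "(\<Sum>x\<in>{x\<in>digit_strings d N. x 0 = p}. Ctilde_kernel N \<beta> x (x(0 := q))) =
    (if p = q then real (pochhammer d (N - 1)) / (fact (N - 1) * real d) *
      ((real d - 1) * (\<Sum>i=1..N. (\<beta> i)\<^sup>2) + (\<Sum>i=1..N. \<beta> i)\<^sup>2) else 0)"
proof -
  let ?I = "{1..N}" and ?X = "{x\<in>digit_strings d N. x 0 = p}"
  let ?c = "if p = q then real (pochhammer d (N - 1)) / (fact (N - 1) * real d) else 0"
  have "(\<Sum>x\<in>?X. Ctilde_kernel N \<beta> x (x(0 := q))) =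
      (\<Sum>a\<in>?I. \<Sum>b\<in>?I. \<beta> a * \<beta> b / fact (N - 1) * (\<Sum>x\<in>?X. Sigma_kernel N a b x (x(0 := q))))"
    unfolding Ctilde_kernel_def by (simp add: sum.swap[where A = ?X] sum_distrib_left)
  also have "\<dots> = (\<Sum>a\<in>?I. \<Sum>b\<in>?I. ?c * (\<beta> a * \<beta> b * (if a = b then real d else 1)))"
    using d by (intro sum.cong refl) (auto simp: sum_Sigma_kernel_trace[OF d _ _ p] field_simps)
  also have "\<dots> = ?c * ((real d - 1) * (\<Sum>i=1..N. (\<beta> i)\<^sup>2) + (\<Sum>i=1..N. \<beta> i)\<^sup>2)"
    by (simp add: sum_sum_if_eq flip: sum_distrib_left)
  finally show ?thesis by simp
qed

lemma Cbeta_normalisation: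
  assumes d: "1 \<le> d" and N: "1 \<le> N"
  shows "real d / real ((N + d - 1) choose N) * (real (N + d - 1) / real N) *
    (real (pochhammer d (N - 1)) / (fact (N - 1) * real d)) = 1"
proof -
  define C where "C = real ((N + d - 1) choose N)"
  define K where "K = real (N + d - 1)"
  define P where "P = real (pochhammer d (N - 1))"
  define f where "f = (fact (N - 1) :: real)"
  obtain M where M: "N = Suc M" using N by (cases N) auto
  have "pochhammer (real d) N = P * K" and "fact N = real N * f"
    using d by (simp_all add: M P_def K_def f_def pochhammer_Suc pochhammer_of_nat add.commute)
  moreover have nonzero: "C \<noteq> 0" "real N \<noteq> 0" "f \<noteq> 0" "real d \<noteq> 0"
    using d N by (simp_all add: C_def f_def)
  ultimately have CNf: "C * (real N * f) = P * K"
    using binomial_eq_pochhammer[OF d, of N] by (simp add: C_def)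
  have "real d / C * (K / real N) * (P / (f * real d)) = (P * K) / (C * (real N * f))"
    using nonzero by (simp add: field_simps)
  also have "\<dots> = 1" using nonzero by (simp add: CNf[symmetric])
  finally show ?thesis by (simp add: C_def K_def P_def f_def)
qed

lemma ptrace_rest_Cbeta:
  assumes d0: "0 < d" and N: "1 \<le> N"
    and \<lambda>: "(real d - 1) * (\<Sum>i=1..N. (\<beta> i)\<^sup>2) + (\<Sum>i=1..N. \<beta> i)\<^sup>2 = 1"
  shows "ptrace_rest d N (Cbeta d N \<beta>) = 1\<^sub>m d"
proof (rule eq_matI)
  let ?s = "real d / real ((N + d - 1) choose N) * (real (N + d - 1) / real N)"
  let ?K = "Ctilde_kernel N \<beta>" and ?x = "basis_digits d N"
  fix p q assume "p < dim_row (1\<^sub>m d)" "q < dim_col (1\<^sub>m d)"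
  then have p: "p < d" and q: "q < d" by auto
  have "Cbeta d N \<beta> $$ (p * d ^ N + r, q * d ^ N + r) =
      complex_of_real (?s * ?K (?x (p * d ^ N + r)) (?x (q * d ^ N + r)))" if "r < d ^ N" for r
    using leading_digit_add_less_power[OF p that] leading_digit_add_less_power[OF q that]
    by (simp add: Cbeta_def Ctilde_index[OF d0] carrier_matD[OF Ctilde_carrier])
  then have "ptrace_rest d N (Cbeta d N \<beta>) $$ (p, q) =
      complex_of_real (?s * (\<Sum>r<d ^ N. ?K (?x (p * d ^ N + r)) (?x (q * d ^ N + r))))"
    using p q by (simp add: ptrace_rest_def sum_distrib_left)
  also have "\<dots> = complex_of_real (?s * (\<Sum>x\<in>{x\<in>digit_strings d N. x 0 = p}. ?K x (x(0 := q))))"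
    by (simp add: sum_block_basis_digits[OF d0 p q])
  also have "\<dots> = complex_of_real (if p = q then 1 else 0)"
  proof (cases "p = q")
    case True
    have "?s * (real (pochhammer d (N - 1)) / (fact (N - 1) * real d)) = 1"
      using d0 N by (intro Cbeta_normalisation) simp_all
    then show ?thesis unfolding sum_Ctilde_kernel_trace[OF d0 p] if_P[OF True] \<lambda> by simp
  qed (simp add: sum_Ctilde_kernel_trace[OF d0 p])
  finally show "ptrace_rest d N (Cbeta d N \<beta>) $$ (p, q) = 1\<^sub>m d $$ (p, q)" using p q by simp
qed (simp_all add: ptrace_rest_def)

theorem mainTheorem11:
  fixes d N :: nat and \<beta> :: "nat \<Rightarrow> real"
  assumes "d \<ge> 2" and "N \<ge> 1"
    and "\<exists>a\<in>{1..N}. \<exists>b\<in>{1..N}. \<beta> a * \<beta> b \<noteq> 0"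
  shows "(orth_proj (Ctilde d N \<beta>) \<longleftrightarrow>
            (real d - 1) * (\<Sum>i=1..N. (\<beta> i)\<^sup>2) + (\<Sum>i=1..N. \<beta> i)\<^sup>2 = 1)
     \<and> ((real d - 1) * (\<Sum>i=1..N. (\<beta> i)\<^sup>2) + (\<Sum>i=1..N. \<beta> i)\<^sup>2 = 1 \<longrightarrow>
            psd (Cbeta d N \<beta>) \<and> ptrace_rest d N (Cbeta d N \<beta>) = 1\<^sub>m d
            \<and> is_channel_choi d N (Cbeta d N \<beta>))"
proof -
  obtain a0 where a0: "a0 \<in> {1..N}" "\<beta> a0 \<noteq> 0" using assms(3) by auto
  note proj_iff = orth_proj_Ctilde_iff[where \<beta> = \<beta>, OF assms(1) a0]
  have "psd (Cbeta d N \<beta>) \<and> ptrace_rest d N (Cbeta d N \<beta>) = 1\<^sub>m d \<and> is_channel_choi d N (Cbeta d N \<beta>)"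
    if \<lambda>: "(real d - 1) * (\<Sum>i=1..N. (\<beta> i)\<^sup>2) + (\<Sum>i=1..N. \<beta> i)\<^sup>2 = 1"
  proof -
    have "psd (Cbeta d N \<beta>)"
      unfolding Cbeta_def using \<lambda> proj_iff by (intro psd_smult psd_orth_proj) simp_all
    moreover have "ptrace_rest d N (Cbeta d N \<beta>) = 1\<^sub>m d"
      using assms(1,2) \<lambda> by (intro ptrace_rest_Cbeta) simp_all
    moreover have "Cbeta d N \<beta> \<in> carrier_mat (d ^ (N + 1)) (d ^ (N + 1))"
      using Ctilde_carrier by (simp add: Cbeta_def)
    ultimately show ?thesis by (simp add: is_channel_choi_def)
  qed
  then show ?thesis using proj_iff by blast
qed

end
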